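(* Let $\mathscr G=(\mathscr V,\mathscr E)$ be a finite connected graph with $N$ vertices and $M\ge0$ an integer. The uniform reshuffling model $(X_t)$ on $\mathscr C_{N,M}$ has a unique stationary distribution $\pi_X$, and $$\lim_{t\to\infty}P_\eta(X_t=\xi)=\pi_X(\xi)\quad\text{for all }\xi,\eta\in\mathscr C_{N,M},$$ where $P_\eta$ denotes the law of the process started from $X_0=\eta$.
   Context: $\mathscr C_{N,M}$ is the set of maps $\xi:\mathscr V\to\mathbb N$ with $\sum_x\xi(x)=M$. The uniform reshuffling model is the discrete-time Markov chain on $\mathscr C_{N,M}$: at each step an edge $(x,y)\in\mathscr E$ is chosen uniformly at random, $U$ is drawn uniformly from $\{0,1,\dots,X_t(x)+X_t(y)\}$, and $X_{t+1}(x)=U$, $X_{t+1}(y)=X_t(x)+X_t(y)-U$, $X_{t+1}(z)=X_t(z)$ for $z\notin\{x,y\}$. *)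

theory Defs
  imports "HOL-Probability.Probability"
begin

text \<open>Vertices are the elements of a finite type 'v (so N = CARD('v)).
  Edges are a set E of ordered pairs; an undirected graph is a symmetric,
  irreflexive E.  Configurations: maps 'v \<Rightarrow> nat.\<close>

definition configs :: "nat \<Rightarrow> ('v::finite \<Rightarrow> nat) set" where
  "configs M = {\<xi>. (\<Sum>x\<in>UNIV. \<xi> x) = M}"

definition connected_graph :: "('v::finite \<times> 'v) set \<Rightarrow> bool" where
  "connected_graph E \<longleftrightarrow> sym E \<and> irrefl E \<and> (\<forall>x y. (x, y) \<in> E\<^sup>*)"

text \<open>One step of the uniform reshuffling chain.  If there are no edges
  (only possible for N = 1) the chain stays put.\<close>
definition reshuffle_step :: "('v \<times> 'v) set \<Rightarrow> ('v \<Rightarrow> nat) \<Rightarrow> ('v \<Rightarrow> nat) pmf" where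
  "reshuffle_step E \<xi> =
     (if E = {} then return_pmf \<xi>
      else bind_pmf (pmf_of_set E) (\<lambda>(x, y).
             bind_pmf (pmf_of_set {0..\<xi> x + \<xi> y}) (\<lambda>u.
               return_pmf (\<xi>(x := u, y := \<xi> x + \<xi> y - u)))))"

primrec reshuffle_law :: "('v \<times> 'v) set \<Rightarrow> ('v \<Rightarrow> nat) \<Rightarrow> nat \<Rightarrow> ('v \<Rightarrow> nat) pmf" where
  "reshuffle_law E \<eta> 0 = return_pmf \<eta>"
| "reshuffle_law E \<eta> (Suc t) = bind_pmf (reshuffle_law E \<eta> t) (reshuffle_step E)"

definition reshuffle_stationary :: "('v::finite \<times> 'v) set \<Rightarrow> nat \<Rightarrow> ('v \<Rightarrow> nat) pmf \<Rightarrow> bool" where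
  "reshuffle_stationary E M \<pi> \<longleftrightarrow>
     set_pmf \<pi> \<subseteq> configs M \<and> bind_pmf \<pi> (reshuffle_step E) = \<pi>"

end

theory Submission
  imports Defs
begin

text \<open>Reshuffling along an edge (x, y) moves \<xi> to each configuration that agrees with \<xi> off
  {x, y} and has the same total there, each with probability 1 / (\<xi> x + \<xi> y + 1); this number is
  the same when seen from the target. Hence the one-step kernel on configs M is symmetric, so doubly
  stochastic, and the uniform law is stationary. The chain is lazy (choose u = \<xi> x) and, on a
  connected graph, irreducible (a chip can be carried along any path), so some power of the kernel
  has all entries at least \<delta> > 0. For a doubly stochastic kernel every step is an averaging, so the
  spread max - min of the law over configs M never grows and shrinks by the factor 1 - 2\<delta> under
  that power: the law tends to uniform from any start, and a stationary law, being its own limit,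
  must be uniform.\<close>

primrec markov_law :: "('a \<Rightarrow> 'a pmf) \<Rightarrow> 'a pmf \<Rightarrow> nat \<Rightarrow> 'a pmf" where
  "markov_law K \<nu> 0 = \<nu>"
| "markov_law K \<nu> (Suc t) = bind_pmf (markov_law K \<nu> t) K"

definition support_rel :: "('a \<Rightarrow> 'a pmf) \<Rightarrow> ('a \<times> 'a) set" where
  "support_rel K = {(a, b). b \<in> set_pmf (K a)}"

definition oscillation_on :: "'a set \<Rightarrow> 'a pmf \<Rightarrow> real" where
  "oscillation_on S \<nu> = Max (pmf \<nu> ` S) - Min (pmf \<nu> ` S)"

lemma markov_law_add:
  "markov_law K \<nu> (t + k) = bind_pmf (markov_law K \<nu> t) (\<lambda>a. markov_law K (return_pmf a) k)"
  by (induction k) (simp_all add: bind_return_pmf' bind_assoc_pmf)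

lemma markov_law_stationary: "bind_pmf \<nu> K = \<nu> \<Longrightarrow> markov_law K \<nu> t = \<nu>"
  by (induction t) simp_all

lemma set_pmf_markov_law_mono:
  assumes lazy: "\<And>a. a \<in> set_pmf (K a)" and "n \<le> m"
  shows "set_pmf (markov_law K \<nu> n) \<subseteq> set_pmf (markov_law K \<nu> m)"
  using \<open>n \<le> m\<close>
proof (induction m rule: dec_induct)
  case (step m)
  then show ?case using lazy by fastforce
qed simp

lemma support_rel_rtrancl_imp_reachable:
  assumes "(a, b) \<in> (support_rel K)\<^sup>*"
  shows "\<exists>n. b \<in> set_pmf (markov_law K (return_pmf a) n)"
  using assms
proof (induction rule: rtrancl_induct)
  case base
  have "a \<in> set_pmf (markov_law K (return_pmf a) 0)" by simp
  then show ?case ..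
next
  case (step b c)
  then obtain n where "b \<in> set_pmf (markov_law K (return_pmf a) n)" by blast
  with step.hyps(2) have "c \<in> set_pmf (markov_law K (return_pmf a) (Suc n))"
    by (auto simp: support_rel_def)
  then show ?case ..
qed

lemma support_rel_rtrancl_closed:
  assumes "\<And>a. a \<in> S \<Longrightarrow> set_pmf (K a) \<subseteq> S" "(a, b) \<in> (support_rel K)\<^sup>*" "a \<in> S"
  shows "b \<in> S"
  using assms(2,3) by induction (use assms(1) in \<open>auto simp: support_rel_def\<close>)

lemma pmf_bind_finite_support:
  assumes "finite S" "set_pmf \<nu> \<subseteq> S"
  shows "pmf (bind_pmf \<nu> K) b = (\<Sum>a\<in>S. pmf \<nu> a * pmf (K a) b)"
  unfolding pmf_bind using assms
  by (subst integral_measure_pmf_real[where A = S]) (auto simp: mult.commute)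

lemma weighted_average_le:
  fixes w f :: "'a \<Rightarrow> real"
  assumes "finite S" "\<And>z. z \<in> S \<Longrightarrow> 0 \<le> w z" "(\<Sum>z\<in>S. w z) = 1"
    and "\<And>z. z \<in> S \<Longrightarrow> f z \<le> h" "z0 \<in> S"
  shows "(\<Sum>z\<in>S. w z * f z) \<le> h - w z0 * (h - f z0)"
proof -
  have "(\<Sum>z\<in>S. w z * f z) - h = (\<Sum>z\<in>S. w z * (f z - h))"
    using assms(3) by (simp add: right_diff_distrib sum_subtractf flip: sum_distrib_right)
  also have "\<dots> = w z0 * (f z0 - h) + (\<Sum>z\<in>S - {z0}. w z * (f z - h))"
    using assms(1,5) by (rule sum.remove)
  also have "(\<Sum>z\<in>S - {z0}. w z * (f z - h)) \<le> 0"
    using assms(2,4) by (intro sum_nonpos mult_nonneg_nonpos) auto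
  finally show ?thesis by (simp add: algebra_simps)
qed

lemma contracting_tendsto_zero:
  fixes D :: "nat \<Rightarrow> real"
  assumes "decseq D" "\<And>t. 0 \<le> D t" "\<And>t. D (t + k) \<le> r * D t" "r < 1"
  shows "D \<longlonglongrightarrow> 0"
proof -
  obtain L where L: "D \<longlonglongrightarrow> L" "\<And>t. L \<le> D t"
    using decseq_convergent[of D 0] assms(1,2) by blast
  have "L \<le> r * L"
    by (rule LIMSEQ_le[OF LIMSEQ_ignore_initial_segment[OF L(1)] tendsto_mult_left[OF L(1)]])
      (use assms(3) in auto)
  then have "(1 - r) * L \<le> 0" by (simp add: algebra_simps)
  moreover have "0 \<le> L" by (rule LIMSEQ_le_const[OF L(1)]) (use assms(2) in auto)
  ultimately have "L = 0" using assms(4) by (simp add: mult_le_0_iff)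
  then show ?thesis using L(1) by simp
qed

lemma lazy_irreducible_minorization:
  assumes "finite S" "S \<noteq> {}"
    and lazy: "\<And>a. a \<in> set_pmf (K a)" and irreducible: "S \<times> S \<subseteq> (support_rel K)\<^sup>*"
  obtains k and \<delta> :: real
  where "0 < \<delta>" "\<forall>a\<in>S. \<forall>b\<in>S. \<delta> \<le> pmf (markov_law K (return_pmf a) k) b"
proof -
  have "\<forall>p\<in>S \<times> S. \<exists>n. snd p \<in> set_pmf (markov_law K (return_pmf (fst p)) n)"
    using irreducible support_rel_rtrancl_imp_reachable by fastforce
  then obtain n where n: "\<And>p. p \<in> S \<times> S \<Longrightarrow> snd p \<in> set_pmf (markov_law K (return_pmf (fst p)) (n p))"
    by metis
  define k where "k = Max (n ` (S \<times> S))"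
  have reach: "b \<in> set_pmf (markov_law K (return_pmf a) k)" if "a \<in> S" "b \<in> S" for a b
  proof -
    have "n (a, b) \<le> k" unfolding k_def using assms(1) that by (intro Max_ge) auto
    then show ?thesis using set_pmf_markov_law_mono[OF lazy] n[of "(a, b)"] that by auto
  qed
  define P where "P = (\<lambda>p. pmf (markov_law K (return_pmf (fst p)) k) (snd p)) ` (S \<times> S)"
  have "0 < Min P"
    unfolding P_def using assms(1,2) reach by (subst Min_gr_iff) (auto simp: pmf_positive)
  moreover have "\<forall>a\<in>S. \<forall>b\<in>S. Min P \<le> pmf (markov_law K (return_pmf a) k) b"
    unfolding P_def using assms(1) by (auto intro!: Min_le image_eqI[of _ _ "(a, b)" for a b])
  ultimately show thesis by (rule that)
qed

locale doubly_stochastic_kernel =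
  fixes S :: "'a set" and K :: "'a \<Rightarrow> 'a pmf"
  assumes finite_S: "finite S" and S_nonempty: "S \<noteq> {}"
    and set_pmf_kernel: "a \<in> S \<Longrightarrow> set_pmf (K a) \<subseteq> S"
    and column_sum: "b \<in> S \<Longrightarrow> (\<Sum>a\<in>S. pmf (K a) b) = 1"
begin

lemma set_pmf_markov_law: "set_pmf \<nu> \<subseteq> S \<Longrightarrow> set_pmf (markov_law K \<nu> t) \<subseteq> S"
  by (induction t) (use set_pmf_kernel in fastforce)+

lemma markov_law_doubly_stochastic: "doubly_stochastic_kernel S (\<lambda>a. markov_law K (return_pmf a) k)"
proof
  show "set_pmf (markov_law K (return_pmf a) k) \<subseteq> S" if "a \<in> S" for a
    using that by (intro set_pmf_markov_law) simp
  show "(\<Sum>a\<in>S. pmf (markov_law K (return_pmf a) k) b) = 1" if "b \<in> S" for b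
    using that
  proof (induction k arbitrary: b)
    case 0
    then show ?case using finite_S by (simp add: indicator_def)
  next
    case (Suc k)
    have "(\<Sum>a\<in>S. pmf (markov_law K (return_pmf a) (Suc k)) b)
        = (\<Sum>a\<in>S. \<Sum>c\<in>S. pmf (markov_law K (return_pmf a) k) c * pmf (K c) b)"
      using finite_S set_pmf_markov_law by (intro sum.cong refl) (simp add: pmf_bind_finite_support)
    also have "\<dots> = (\<Sum>c\<in>S. (\<Sum>a\<in>S. pmf (markov_law K (return_pmf a) k) c) * pmf (K c) b)"
      by (subst sum.swap) (simp add: sum_distrib_right)
    also have "\<dots> = 1"
      using Suc column_sum by simp
    finally show ?case .
  qed
qed (use finite_S S_nonempty in auto)

lemma pmf_bind_bounds:
  assumes \<nu>: "set_pmf \<nu> \<subseteq> S" and minor: "\<forall>a\<in>S. \<forall>b\<in>S. \<delta> \<le> pmf (K a) b" and b: "b \<in> S"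
  shows "Min (pmf \<nu> ` S) + \<delta> * oscillation_on S \<nu> \<le> pmf (bind_pmf \<nu> K) b"
    and "pmf (bind_pmf \<nu> K) b \<le> Max (pmf \<nu> ` S) - \<delta> * oscillation_on S \<nu>"
proof -
  let ?lo = "Min (pmf \<nu> ` S)" and ?hi = "Max (pmf \<nu> ` S)"
  obtain a_lo a_hi where a: "a_lo \<in> S" "pmf \<nu> a_lo = ?lo" "a_hi \<in> S" "pmf \<nu> a_hi = ?hi"
    using finite_S S_nonempty Min_in[of "pmf \<nu> ` S"] Max_in[of "pmf \<nu> ` S"] by fastforce
  have range: "?lo \<le> pmf \<nu> a" "pmf \<nu> a \<le> ?hi" if "a \<in> S" for a
    using finite_S that by auto
  have avg: "pmf (bind_pmf \<nu> K) b = (\<Sum>a\<in>S. pmf (K a) b * pmf \<nu> a)"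
    using pmf_bind_finite_support[OF finite_S \<nu>] by (simp add: mult.commute)
  have "(\<Sum>a\<in>S. pmf (K a) b * pmf \<nu> a) \<le> ?hi - pmf (K a_lo) b * (?hi - ?lo)"
    using weighted_average_le[OF finite_S _ column_sum[OF b], of "pmf \<nu>" ?hi a_lo] range a by simp
  also have "\<dots> \<le> ?hi - \<delta> * (?hi - ?lo)"
    using minor a b range[of a_lo] by (intro diff_left_mono mult_right_mono) auto
  finally show "pmf (bind_pmf \<nu> K) b \<le> ?hi - \<delta> * oscillation_on S \<nu>"
    by (simp add: avg oscillation_on_def)
  have "(\<Sum>a\<in>S. pmf (K a) b * - pmf \<nu> a) \<le> - ?lo - pmf (K a_hi) b * (?hi - ?lo)"
    using weighted_average_le[OF finite_S _ column_sum[OF b], of "\<lambda>a. - pmf \<nu> a" "- ?lo" a_hi]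
      range a by simp
  also have "\<dots> \<le> - ?lo - \<delta> * (?hi - ?lo)"
    using minor a b range[of a_lo] by (intro diff_left_mono mult_right_mono) auto
  finally show "?lo + \<delta> * oscillation_on S \<nu> \<le> pmf (bind_pmf \<nu> K) b"
    by (simp add: avg oscillation_on_def sum_negf)
qed

lemma oscillation_bind_le:
  assumes "set_pmf \<nu> \<subseteq> S" and "\<forall>a\<in>S. \<forall>b\<in>S. \<delta> \<le> pmf (K a) b"
  shows "oscillation_on S (bind_pmf \<nu> K) \<le> (1 - 2 * \<delta>) * oscillation_on S \<nu>"
proof -
  have "Max (pmf (bind_pmf \<nu> K) ` S) \<le> Max (pmf \<nu> ` S) - \<delta> * oscillation_on S \<nu>"
    using finite_S S_nonempty pmf_bind_bounds(2)[OF assms] by simp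
  moreover have "Min (pmf \<nu> ` S) + \<delta> * oscillation_on S \<nu> \<le> Min (pmf (bind_pmf \<nu> K) ` S)"
    using finite_S S_nonempty pmf_bind_bounds(1)[OF assms] by simp
  ultimately show ?thesis by (simp add: oscillation_on_def algebra_simps)
qed

lemma pmf_near_uniform:
  assumes "set_pmf \<nu> \<subseteq> S" "\<xi> \<in> S"
  shows "\<bar>pmf \<nu> \<xi> - pmf (pmf_of_set S) \<xi>\<bar> \<le> oscillation_on S \<nu>"
proof -
  let ?lo = "Min (pmf \<nu> ` S)" and ?hi = "Max (pmf \<nu> ` S)"
  have range: "?lo \<le> pmf \<nu> a \<and> pmf \<nu> a \<le> ?hi" if "a \<in> S" for a
    using finite_S that by auto
  have total: "(\<Sum>a\<in>S. pmf \<nu> a) = 1" using sum_pmf_eq_1[OF finite_S assms(1)] .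
  have "real (card S) * ?lo \<le> 1" "1 \<le> real (card S) * ?hi"
    using sum_bounded_below[of S ?lo "pmf \<nu>"] sum_bounded_above[of S "pmf \<nu>" ?hi] range total
    by auto
  then have "?lo \<le> 1 / card S" "1 / card S \<le> ?hi"
    using finite_S S_nonempty by (simp_all add: card_gt_0_iff field_simps)
  then show ?thesis
    using range[OF assms(2)] assms(2) pmf_of_set[OF S_nonempty finite_S]
    by (auto simp: oscillation_on_def abs_if)
qed

lemma pmf_of_set_stationary: "bind_pmf (pmf_of_set S) K = pmf_of_set S"
proof (rule pmf_eqI)
  fix b
  have "pmf (bind_pmf (pmf_of_set S) K) b = (\<Sum>a\<in>S. pmf (K a) b) / card S"
    using finite_S S_nonempty by (simp add: pmf_bind_pmf_of_set)
  also have "\<dots> = pmf (pmf_of_set S) b"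
  proof (cases "b \<in> S")
    case False
    then have "pmf (K a) b = 0" if "a \<in> S" for a
      using set_pmf_kernel[OF that] by (auto simp: set_pmf_iff)
    then show ?thesis using False finite_S S_nonempty by simp
  qed (use finite_S S_nonempty column_sum in simp)
  finally show "pmf (bind_pmf (pmf_of_set S) K) b = pmf (pmf_of_set S) b" .
qed

theorem markov_law_tendsto_uniform:
  assumes minor: "\<forall>a\<in>S. \<forall>b\<in>S. \<delta> \<le> pmf (markov_law K (return_pmf a) k) b" and "0 < \<delta>"
    and \<nu>: "set_pmf \<nu> \<subseteq> S" and "\<xi> \<in> S"
  shows "(\<lambda>t. pmf (markov_law K \<nu> t) \<xi>) \<longlonglongrightarrow> pmf (pmf_of_set S) \<xi>"
proof -
  interpret k_step: doubly_stochastic_kernel S "\<lambda>a. markov_law K (return_pmf a) k"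
    by (rule markov_law_doubly_stochastic)
  define D where "D t = oscillation_on S (markov_law K \<nu> t)" for t
  have law: "set_pmf (markov_law K \<nu> t) \<subseteq> S" for t
    using \<nu> by (rule set_pmf_markov_law)
  have near: "\<bar>pmf (markov_law K \<nu> t) \<xi> - pmf (pmf_of_set S) \<xi>\<bar> \<le> D t" for t
    unfolding D_def using law \<open>\<xi> \<in> S\<close> by (rule pmf_near_uniform)
  have "D (Suc t) \<le> D t" for t
    using oscillation_bind_le[OF law, where \<delta> = 0] by (simp add: D_def)
  then have "decseq D" by (rule decseq_SucI)
  moreover have "0 \<le> D t" for t
    by (rule order_trans[OF abs_ge_zero near])
  moreover have "D (t + k) \<le> (1 - 2 * \<delta>) * D t" for t
    unfolding D_def markov_law_add by (rule k_step.oscillation_bind_le[OF law minor])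
  moreover have "1 - 2 * \<delta> < 1" using \<open>0 < \<delta>\<close> by simp
  ultimately have D_tendsto: "D \<longlonglongrightarrow> 0" by (rule contracting_tendsto_zero)
  have "(\<lambda>t. pmf (markov_law K \<nu> t) \<xi> - pmf (pmf_of_set S) \<xi>) \<longlonglongrightarrow> 0"
    by (rule Lim_null_comparison[OF always_eventually D_tendsto]) (use near in simp)
  then show ?thesis by (simp only: Lim_null[symmetric])
qed

lemma stationary_eq_pmf_of_set:
  assumes minor: "\<forall>a\<in>S. \<forall>b\<in>S. \<delta> \<le> pmf (markov_law K (return_pmf a) k) b" "0 < \<delta>"
    and \<pi>: "set_pmf \<pi> \<subseteq> S" "bind_pmf \<pi> K = \<pi>"
  shows "\<pi> = pmf_of_set S"
proof (rule pmf_eqI)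
  fix \<xi>
  show "pmf \<pi> \<xi> = pmf (pmf_of_set S) \<xi>"
  proof (cases "\<xi> \<in> S")
    case True
    have "(\<lambda>t. pmf \<pi> \<xi>) \<longlonglongrightarrow> pmf (pmf_of_set S) \<xi>"
      using markov_law_tendsto_uniform[OF minor \<pi>(1) True] by (simp add: markov_law_stationary[OF \<pi>(2)])
    then show ?thesis by (simp add: LIMSEQ_const_iff)
  next
    case False
    then show ?thesis using \<pi>(1) finite_S S_nonempty by (auto simp: set_pmf_iff)
  qed
qed

end

lemma doubly_stochastic_kernelI_symmetric:
  assumes "finite S" "S \<noteq> {}" "\<And>a. a \<in> S \<Longrightarrow> set_pmf (K a) \<subseteq> S"
    and symmetric: "\<And>a b. a \<in> S \<Longrightarrow> b \<in> S \<Longrightarrow> pmf (K a) b = pmf (K b) a"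
  shows "doubly_stochastic_kernel S K"
proof
  show "(\<Sum>a\<in>S. pmf (K a) b) = 1" if "b \<in> S" for b
    using sum_pmf_eq_1[OF assms(1) assms(3)[OF that]] symmetric[OF _ that] by simp
qed (use assms in auto)

lemma sum_fun_upd_add:
  fixes f :: "'a \<Rightarrow> 'b::comm_monoid_add"
  assumes "finite A" "x \<in> A"
  shows "sum (f(x := u)) A + f x = sum f A + u"
proof -
  have "sum (f(x := u)) A = u + sum f (A - {x})" "sum f A = f x + sum f (A - {x})"
    using assms by (simp_all add: sum.remove)
  then show ?thesis by (simp add: ac_simps)
qed

lemma finite_configs: "finite (configs M :: ('v::finite \<Rightarrow> nat) set)"
proof (rule finite_subset)
  show "configs M \<subseteq> (\<Pi>\<^sub>E x\<in>UNIV. {..M})"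
    by (auto simp: configs_def PiE_UNIV_domain intro: member_le_sum[of _ UNIV, simplified])
qed (simp add: finite_PiE)

lemma configs_nonempty: "configs M \<noteq> ({} :: ('v::finite \<Rightarrow> nat) set)"
proof -
  fix x0 :: 'v
  have "(\<lambda>x. if x = x0 then M else 0) \<in> configs M"
    by (simp add: configs_def)
  then show ?thesis by blast
qed

lemma reshuffle_law_eq_markov_law:
  "reshuffle_law E \<eta> t = markov_law (reshuffle_step E) (return_pmf \<eta>) t"
  by (induction t) simp_all

definition reshuffle_edge :: "('v \<Rightarrow> nat) \<Rightarrow> 'v \<Rightarrow> 'v \<Rightarrow> ('v \<Rightarrow> nat) pmf" where
  "reshuffle_edge \<xi> x y =
     map_pmf (\<lambda>u. \<xi>(x := u, y := \<xi> x + \<xi> y - u)) (pmf_of_set {0..\<xi> x + \<xi> y})"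

lemma reshuffle_step_eq_edge:
  "E \<noteq> {} \<Longrightarrow> reshuffle_step E \<xi> = bind_pmf (pmf_of_set E) (\<lambda>(x, y). reshuffle_edge \<xi> x y)"
  by (simp add: reshuffle_step_def reshuffle_edge_def map_pmf_def)

lemma set_pmf_reshuffle_edge:
  "set_pmf (reshuffle_edge \<xi> x y) = (\<lambda>u. \<xi>(x := u, y := \<xi> x + \<xi> y - u)) ` {0..\<xi> x + \<xi> y}"
  by (simp add: reshuffle_edge_def)

lemma set_pmf_reshuffle_step:
  fixes E :: "('v::finite \<times> 'v) set"
  assumes "E \<noteq> {}"
  shows "set_pmf (reshuffle_step E \<xi>) = (\<Union>(x, y)\<in>E. set_pmf (reshuffle_edge \<xi> x y))"
  using assms by (auto simp: reshuffle_step_eq_edge)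

lemma pmf_reshuffle_edge:
  assumes "x \<noteq> y"
  shows "pmf (reshuffle_edge \<xi> x y) \<xi>' =
    (if (\<forall>z. z \<noteq> x \<and> z \<noteq> y \<longrightarrow> \<xi>' z = \<xi> z) \<and> \<xi>' x + \<xi>' y = \<xi> x + \<xi> y
     then 1 / (\<xi> x + \<xi> y + 1) else 0)"
proof -
  let ?s = "\<xi> x + \<xi> y" and ?f = "\<lambda>u. \<xi>(x := u, y := \<xi> x + \<xi> y - u)"
  have "{0..?s} \<inter> ?f -` {\<xi>'} =
      (if (\<forall>z. z \<noteq> x \<and> z \<noteq> y \<longrightarrow> \<xi>' z = \<xi> z) \<and> \<xi>' x + \<xi>' y = ?s then {\<xi>' x} else {})"
    using assms by (auto simp: fun_eq_iff)
  then show ?thesis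
    by (simp add: reshuffle_edge_def pmf_map measure_pmf_of_set) blast
qed

lemma pmf_reshuffle_edge_commute:
  "x \<noteq> y \<Longrightarrow> pmf (reshuffle_edge \<xi> x y) \<xi>' = pmf (reshuffle_edge \<xi>' x y) \<xi>"
  by (simp add: pmf_reshuffle_edge) metis

lemma pmf_reshuffle_step_commute:
  fixes E :: "('v::finite \<times> 'v) set"
  assumes "irrefl E"
  shows "pmf (reshuffle_step E \<xi>) \<xi>' = pmf (reshuffle_step E \<xi>') \<xi>"
proof (cases "E = {}")
  case False
  have "x \<noteq> y" if "(x, y) \<in> E" for x y
    using assms that by (auto simp: irrefl_def)
  then show ?thesis using False
    by (simp add: reshuffle_step_eq_edge pmf_bind_pmf_of_set split_beta)
      (intro sum.cong refl, simp add: pmf_reshuffle_edge_commute)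
qed (simp add: reshuffle_step_def indicator_def)

lemma reshuffle_step_closed:
  fixes E :: "('v::finite \<times> 'v) set"
  assumes "irrefl E" "\<xi> \<in> configs M"
  shows "set_pmf (reshuffle_step E \<xi>) \<subseteq> configs M"
proof (cases "E = {}")
  case False
  have "\<xi>(x := u, y := \<xi> x + \<xi> y - u) \<in> configs M" if "(x, y) \<in> E" "u \<le> \<xi> x + \<xi> y" for x y u
  proof -
    have "x \<noteq> y" using assms(1) that(1) by (auto simp: irrefl_def)
    then show ?thesis
      using sum_fun_upd_add[of UNIV y "\<xi>(x := u)" "\<xi> x + \<xi> y - u"] sum_fun_upd_add[of UNIV x \<xi> u]
        that(2) assms(2)
      by (simp add: configs_def)
  qed
  then show ?thesis
    using False by (auto simp: set_pmf_reshuffle_step set_pmf_reshuffle_edge)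
qed (use assms in \<open>simp add: reshuffle_step_def\<close>)

lemma reshuffle_step_lazy: "\<xi> \<in> set_pmf (reshuffle_step E \<xi>)"
  for E :: "('v::finite \<times> 'v) set"
proof (cases "E = {}")
  case False
  then obtain x y where "(x, y) \<in> E" by auto
  moreover have "\<xi> = \<xi>(x := \<xi> x, y := \<xi> x + \<xi> y - \<xi> x)" by simp
  ultimately show ?thesis
    using False unfolding set_pmf_reshuffle_step[OF False] set_pmf_reshuffle_edge by fastforce
qed (simp add: reshuffle_step_def)

lemma reshuffle_doubly_stochastic:
  fixes E :: "('v::finite \<times> 'v) set"
  assumes "irrefl E"
  shows "doubly_stochastic_kernel (configs M) (reshuffle_step E)"
  using finite_configs configs_nonempty reshuffle_step_closed[OF assms]
    pmf_reshuffle_step_commute[OF assms]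
  by (rule doubly_stochastic_kernelI_symmetric)

text \<open>The case a = b is separate because the two updates would then hit the same vertex.\<close>

definition move_chip :: "('v \<Rightarrow> nat) \<Rightarrow> 'v \<Rightarrow> 'v \<Rightarrow> 'v \<Rightarrow> nat" where
  "move_chip \<xi> a b = (if a = b then \<xi> else \<xi>(a := \<xi> a - 1, b := \<xi> b + 1))"

lemma move_chip_along_edge:
  fixes E :: "('v::finite \<times> 'v) set"
  assumes "(a, b) \<in> E" "0 < \<xi> a"
  shows "(\<xi>, move_chip \<xi> a b) \<in> support_rel (reshuffle_step E)"
proof (cases "a = b")
  case True
  then show ?thesis by (simp add: move_chip_def support_rel_def reshuffle_step_lazy)
next
  case False
  have "E \<noteq> {}" using assms(1) by auto
  moreover have "move_chip \<xi> a b = \<xi>(a := \<xi> a - 1, b := \<xi> a + \<xi> b - (\<xi> a - 1))"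
    using False assms(2) by (auto simp: move_chip_def fun_eq_iff)
  ultimately show ?thesis
    using assms(1) by (force simp: support_rel_def set_pmf_reshuffle_step set_pmf_reshuffle_edge)
qed

lemma move_chip_along_path:
  fixes E :: "('v::finite \<times> 'v) set"
  assumes "(a, b) \<in> E\<^sup>*" "0 < \<xi> a"
  shows "(\<xi>, move_chip \<xi> a b) \<in> (support_rel (reshuffle_step E))\<^sup>*"
  using assms(1)
proof (induction rule: rtrancl_induct)
  case base
  then show ?case by (simp add: move_chip_def)
next
  case (step b c)
  consider "b = c" | "a = b" "b \<noteq> c" | "a \<noteq> b" "b \<noteq> c" by blast
  then show ?case
  proof cases
    case 1
    then show ?thesis using step.IH by simp
  next
    case 2
    then show ?thesis using r_into_rtrancl[OF move_chip_along_edge[OF step.hyps(2)]] assms(2) by simp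
  next
    case 3
    then have "0 < move_chip \<xi> a b b" "move_chip (move_chip \<xi> a b) b c = move_chip \<xi> a c"
      using assms(2) by (auto simp: move_chip_def fun_eq_iff)
    then show ?thesis
      using rtrancl_into_rtrancl[OF step.IH move_chip_along_edge[OF step.hyps(2)]] by simp
  qed
qed

lemma configs_le_imp_eq:
  assumes "\<xi> \<in> configs M" "\<xi>' \<in> configs M" "\<And>x. \<xi> x \<le> \<xi>' x"
  shows "\<xi> = \<xi>'"
proof (rule ccontr)
  assume "\<xi> \<noteq> \<xi>'"
  then obtain x where "\<xi> x < \<xi>' x" using assms(3) le_neq_implies_less by blast
  then have "(\<Sum>x\<in>UNIV. \<xi> x) < (\<Sum>x\<in>UNIV. \<xi>' x)"
    using assms(3) by (intro sum_strict_mono_ex1) auto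
  then show False using assms(1,2) by (simp add: configs_def)
qed

lemma reshuffle_irreducible:
  fixes E :: "('v::finite \<times> 'v) set"
  assumes "irrefl E" and connected: "\<forall>x y. (x, y) \<in> E\<^sup>*"
  shows "configs M \<times> configs M \<subseteq> (support_rel (reshuffle_step E))\<^sup>*"
proof clarify
  fix \<xi> \<xi>' :: "'v \<Rightarrow> nat"
  assume "\<xi> \<in> configs M" "\<xi>' \<in> configs M"
  then show "(\<xi>, \<xi>') \<in> (support_rel (reshuffle_step E))\<^sup>*"
    \<comment> \<open>induction on the surplus of \<xi> over \<xi>'; carrying a chip from a surplus vertex to a
      deficit vertex lowers it by one\<close>
  proof (induction "\<Sum>x\<in>UNIV. \<xi> x - \<xi>' x" arbitrary: \<xi> rule: less_induct)
    case less
    show ?case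
    proof (cases "\<xi> = \<xi>'")
      case False
      obtain a where a: "\<xi>' a < \<xi> a"
        using configs_le_imp_eq[OF less.prems] False not_le by blast
      obtain b where b: "\<xi> b < \<xi>' b"
        using configs_le_imp_eq[OF less.prems(2,1)] False not_le by metis
      let ?\<zeta> = "move_chip \<xi> a b"
      have path: "(\<xi>, ?\<zeta>) \<in> (support_rel (reshuffle_step E))\<^sup>*"
        using connected a by (intro move_chip_along_path) auto
      have "?\<zeta> \<in> configs M"
        using reshuffle_step_closed[OF assms(1)] path less.prems(1) by (rule support_rel_rtrancl_closed)
      moreover have "(\<Sum>x\<in>UNIV. ?\<zeta> x - \<xi>' x) < (\<Sum>x\<in>UNIV. \<xi> x - \<xi>' x)"
        using a b by (intro sum_strict_mono_ex1) (auto simp: move_chip_def)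
      ultimately show ?thesis
        using less.hyps less.prems(2) path by (meson rtrancl_trans)
    qed simp
  qed
qed

theorem lemma1:
  fixes E :: "('v::finite \<times> 'v) set" and M :: nat
  assumes "connected_graph E"
  shows "\<exists>\<pi>. reshuffle_stationary E M \<pi>
            \<and> (\<forall>\<pi>'. reshuffle_stationary E M \<pi>' \<longrightarrow> \<pi>' = \<pi>)
            \<and> (\<forall>\<xi>\<in>configs M. \<forall>\<eta>\<in>configs M.
                 (\<lambda>t. pmf (reshuffle_law E \<eta> t) \<xi>) \<longlonglongrightarrow> pmf \<pi> \<xi>)"
proof -
  have irrefl: "irrefl E" and connected: "\<forall>x y. (x, y) \<in> E\<^sup>*"
    using assms by (auto simp: connected_graph_def)
  interpret doubly_stochastic_kernel "configs M" "reshuffle_step E"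
    using irrefl by (rule reshuffle_doubly_stochastic)
  obtain k \<delta> where "0 < \<delta>"
    and minor: "\<forall>a\<in>configs M. \<forall>b\<in>configs M. \<delta> \<le> pmf (markov_law (reshuffle_step E) (return_pmf a) k) b"
    by (rule lazy_irreducible_minorization[OF finite_S S_nonempty reshuffle_step_lazy
        reshuffle_irreducible[OF irrefl connected]])
  show ?thesis
  proof (intro exI conjI allI impI ballI)
    show "reshuffle_stationary E M (pmf_of_set (configs M))"
      using finite_S S_nonempty by (simp add: reshuffle_stationary_def pmf_of_set_stationary)
    show "\<pi> = pmf_of_set (configs M)" if "reshuffle_stationary E M \<pi>" for \<pi>
      using that stationary_eq_pmf_of_set[OF minor \<open>0 < \<delta>\<close>]
      unfolding reshuffle_stationary_def by blast
    show "(\<lambda>t. pmf (reshuffle_law E \<eta> t) \<xi>) \<longlonglongrightarrow> pmf (pmf_of_set (configs M)) \<xi>"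
      if "\<xi> \<in> configs M" "\<eta> \<in> configs M" for \<xi> \<eta>
      using markov_law_tendsto_uniform[OF minor \<open>0 < \<delta>\<close>, of "return_pmf \<eta>" \<xi>] that
      by (simp add: reshuffle_law_eq_markov_law)
  qed
qed

end
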